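(* Let $ABCD$ be a parallelogram with center $O$ (the intersection of its diagonals), and let $f\colon ABCD\to\mathbb{R}$ be a function whose restrictions to the triangles $AOB$, $BOC$, $COD$ and $DOA$ are convex. Let $A'B'C'D'=h_O^{2/3}(ABCD)$ (i.e. $A'=h_O^{2/3}(A)$, etc.), and let $KL=h_D^{2/3}(AO)$, $LM=h_D^{2/3}(OC)$, $PQ=h_B^{2/3}(AO)$, $QR=h_B^{2/3}(OC)$. Then $$\frac{\operatorname{Avg}(f,KL)+\operatorname{Avg}(f,LM)+\operatorname{Avg}(f,PQ)+\operatorname{Avg}(f,QR)}{4}\le\operatorname{Avg}(f,ABCD),$$ $$\frac{\operatorname{Avg}(f,A'B')+\operatorname{Avg}(f,B'C')+\operatorname{Avg}(f,C'D')+\operatorname{Avg}(f,D'A')}{4}\le\operatorname{Avg}(f,ABCD).$$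
   Context: $h_{\mathbf a}^\lambda$ denotes the homothety with center $\mathbf a$ and ratio $\lambda$: $h_{\mathbf a}^\lambda(\mathbf x)=\mathbf a+\lambda(\mathbf x-\mathbf a)$. For a set $U$ which is a $k$-dimensional object (segment, polygon) and an integrable $f$, $\operatorname{Avg}(f,U)=\frac{1}{\operatorname{Vol}_k(U)}\int_U f$, with $\operatorname{Vol}_k$ the $k$-dimensional measure (length, area). For points $X,Y,\dots$, $\operatorname{Avg}(f,XY\dots)$ means $\operatorname{Avg}(f,\operatorname{conv}\{X,Y,\dots\})$. *)

theory Defs
  imports "HOL-Analysis.Analysis"
begin

definition homothety :: "'a::real_vector \<Rightarrow> real \<Rightarrow> 'a \<Rightarrow> 'a" where
  "homothety a lam x = a + lam *\<^sub>R (x - a)"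

text \<open>Average of f over the segment [P,Q] with respect to arc length:
  (1/|PQ|) \<integral>_[P,Q] f ds = \<integral>_0^1 f(P + t(Q-P)) dt (P \<noteq> Q).\<close>
definition avg_seg :: "('a::real_normed_vector \<Rightarrow> real) \<Rightarrow> 'a \<Rightarrow> 'a \<Rightarrow> real" where
  "avg_seg f P Q = integral {0..1} (\<lambda>t. f (P + t *\<^sub>R (Q - P)))"

definition avg_region :: "(real^2 \<Rightarrow> real) \<Rightarrow> (real^2) set \<Rightarrow> real" where
  "avg_region f S = integral S f / measure lebesgue S"

end

theory Submission
  imports Defs
begin

text \<open>Slice a triangle \<open>VXY\<close> by the segments \<open>h\<^sub>V\<^sup>s(X) h\<^sub>V\<^sup>s(Y)\<close>, \<open>0 < s < 1\<close>.
  The slice at \<open>s\<close> has length proportional to \<open>s\<close>, so by Fubini the average of \<open>f\<close> over the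
  triangle is \<open>\<integral>\<^sub>0\<^sup>1 2s G(s) ds\<close>, where \<open>G(s)\<close> is the average of \<open>f\<close> over the slice at \<open>s\<close>.
  Convexity of \<open>f\<close> makes \<open>G\<close> convex, and the density \<open>2s\<close> has mean \<open>2/3\<close>, so Jensen's
  inequality gives \<open>G(2/3) \<le> Avg(f, VXY)\<close>. The diagonals cut the parallelogram into the four
  triangles \<open>AOB, BOC, COD, DOA\<close> of equal area, and each of the eight segments in the statement
  is the slice at \<open>2/3\<close> of one of them, seen from its vertex \<open>B\<close>, \<open>D\<close> or \<open>O\<close>; averaging
  four such inequalities gives each claim.\<close>

section \<open>Planar coordinates and Lebesgue measure\<close>

definition det2 :: "real^2 \<Rightarrow> real^2 \<Rightarrow> real" where
  "det2 u w = u$1 * w$2 - u$2 * w$1"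

definition vec2 :: "real \<times> real \<Rightarrow> real^2" where
  "vec2 z = (\<chi> i. if i = 1 then fst z else snd z)"

lemma vec2_nth [simp]: "vec2 z $ 1 = fst z" "vec2 z $ 2 = snd z"
  by (simp_all add: vec2_def)

lemma linear_vec2: "linear vec2"
  by (auto simp: linear_iff vec_eq_iff forall_2)

lemma continuous_on_vec2: "continuous_on UNIV vec2"
  using linear_vec2 by (intro linear_continuous_on) (simp add: linear_conv_bounded_linear)

lemma borel_measurable_vec2 [measurable]: "vec2 \<in> borel_measurable borel"
  using continuous_on_vec2 by (rule borel_measurable_continuous_onI)

lemma distr_vec2_lborel: "distr lborel borel vec2 = (lborel :: (real^2) measure)"
proof (rule lborel_eqI[symmetric])
  fix l u :: "real^2"
  assume le: "\<And>b. b \<in> Basis \<Longrightarrow> l \<bullet> b \<le> u \<bullet> b"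
  have Basis: "(Basis :: (real^2) set) = {axis 1 1, axis 2 1}"
    by (auto simp: Basis_vec_def UNIV_2)
  have "axis 1 1 \<noteq> (axis 2 1 :: real^2)"
    by (simp add: axis_eq_axis)
  then have prod: "(\<Prod>b\<in>Basis. (u - l) \<bullet> b) = (u$1 - l$1) * (u$2 - l$2)"
    by (simp add: Basis inner_axis)
  have l1: "l$1 \<le> u$1" and l2: "l$2 \<le> u$2"
    using le[of "axis 1 1"] le[of "axis 2 1"] by (auto simp: Basis inner_axis)
  have "vec2 -` box l u = box (l$1) (u$1) \<times> box (l$2) (u$2)"
    by (auto simp: mem_box_cart forall_2 box_real)
  then have "emeasure (distr lborel borel vec2) (box l u)
      = emeasure (lborel \<Otimes>\<^sub>M lborel) (box (l$1) (u$1) \<times> box (l$2) (u$2))"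
    by (simp add: emeasure_distr lborel_prod)
  also have "\<dots> = (\<Prod>b\<in>Basis. (u - l) \<bullet> b)"
    by (simp add: lborel.emeasure_pair_measure_Times box_real l1 l2 prod ennreal_mult)
  finally show "emeasure (distr lborel borel vec2) (box l u) = (\<Prod>b\<in>Basis. (u - l) \<bullet> b)" .
qed simp

lemma
  fixes h :: "real^2 \<Rightarrow> real"
  assumes "h \<in> borel_measurable borel"
  shows integral_lborel_vec2: "integral\<^sup>L lborel h = integral\<^sup>L lborel (\<lambda>z. h (vec2 z))"
    and integrable_lborel_vec2: "integrable lborel h \<longleftrightarrow> integrable lborel (\<lambda>z. h (vec2 z))"
  by (subst distr_vec2_lborel[symmetric], simp add: assms integral_distr integrable_distr_eq)+

lemma collinear_if_det2_eq_0:
  fixes x y :: "real^2"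
  assumes "det2 x y = 0"
  shows "collinear {0, x, y}"
proof (cases "x$1 = 0")
  case True
  show ?thesis
  proof (cases "x$2 = 0")
    case True
    with \<open>x$1 = 0\<close> have "x = 0" by (simp add: vec_eq_iff forall_2)
    then show ?thesis by (simp add: collinear_lemma)
  next
    case False
    with True assms have "y = (y$2 / x$2) *\<^sub>R x" by (simp add: det2_def vec_eq_iff forall_2)
    then show ?thesis by (auto simp: collinear_lemma)
  qed
next
  case False
  with assms have "y = (y$1 / x$1) *\<^sub>R x"
    by (simp add: det2_def vec_eq_iff forall_2 field_simps)
  then show ?thesis by (auto simp: collinear_lemma)
qed

lemma negligible_line:
  fixes P d :: "real^2"
  assumes "d \<noteq> 0"
  shows "negligible {P + t *\<^sub>R d | t. True}"
proof -
  define n :: "real^2" where "n = (\<chi> i. if i = 1 then d$2 else - d$1)"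
  have "n \<noteq> 0" using assms by (auto simp: n_def vec_eq_iff forall_2)
  then have "negligible {x. n \<bullet> x = n \<bullet> P}" by (intro negligible_hyperplane) simp
  moreover have "{P + t *\<^sub>R d | t. True} \<subseteq> {x. n \<bullet> x = n \<bullet> P}"
    by (auto simp: n_def inner_vec_def sum_2 algebra_simps)
  ultimately show ?thesis by (rule negligible_subset)
qed

lemma set_integrable_bounded_continuous_on:
  fixes h :: "'a::euclidean_space \<Rightarrow> real"
  assumes S: "S \<in> sets borel" "bounded S" and cont: "continuous_on S h"
    and bound: "\<And>x. x \<in> S \<Longrightarrow> \<bar>h x\<bar> \<le> K"
  shows "set_integrable lborel S h"
proof -
  have "integrable lborel (\<lambda>x. indicator S x *\<^sub>R (indicator S x *\<^sub>R h x))"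
  proof (rule integrableI_bounded_set_indicator[where B=K])
    show "(\<lambda>x. indicator S x *\<^sub>R h x) \<in> borel_measurable lborel"
      using borel_measurable_continuous_on_indicator[OF S(1) cont] by simp
    show "emeasure lborel S < \<infinity>"
      using S emeasure_bounded_finite by blast
  qed (use S bound in auto)
  moreover have "(\<lambda>x. indicator S x *\<^sub>R (indicator S x *\<^sub>R h x)) = (\<lambda>x. indicator S x *\<^sub>R h x)"
    by (simp add: indicator_def fun_eq_iff)
  ultimately show ?thesis
    unfolding set_integrable_def by metis
qed

section \<open>Convex functions\<close>

lemma convex_on_supporting_line:
  fixes G :: "real \<Rightarrow> real"
  assumes cv: "convex_on {a<..<b} G" and x0: "a < x0" "x0 < b"
  obtains c where "\<And>s. s \<in> {a<..<b} \<Longrightarrow> G x0 + c * (s - x0) \<le> G s"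
proof -
  define slopes where "slopes = (\<lambda>t. (G x0 - G t) / (x0 - t)) ` {x0<..<b}"
  have left_le: "(G x0 - G t) / (x0 - t) \<le> r" if t: "t \<in> {a<..<x0}" and r: "r \<in> slopes" for t r
  proof -
    obtain u where u: "u \<in> {x0<..<b}" "r = (G x0 - G u) / (x0 - u)"
      using r unfolding slopes_def by auto
    have "(G t - G x0) / (t - x0) \<le> (G t - G u) / (t - u)"
      using convex_on_slope_le(1)[OF cv, of t u x0] t u x0 by auto
    also have "\<dots> \<le> (G x0 - G u) / (x0 - u)"
      using convex_on_slope_le(2)[OF cv, of t u x0] t u x0 by auto
    finally show ?thesis using u by (metis minus_diff_eq minus_divide_divide)
  qed
  obtain t0 where "t0 \<in> {a<..<x0}" using x0 by (meson dense greaterThanLessThan_iff)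
  then have bdd: "bdd_below slopes"
    using left_le unfolding bdd_below_def by blast
  have ne: "slopes \<noteq> {}" using x0 unfolding slopes_def by auto
  show ?thesis
  proof
    fix s assume s: "s \<in> {a<..<b}"
    consider "s < x0" | "s = x0" | "x0 < s" by linarith
    then show "G x0 + Inf slopes * (s - x0) \<le> G s"
    proof cases
      case 1
      have "(G x0 - G s) / (x0 - s) \<le> Inf slopes"
        using left_le s 1 ne by (intro cInf_greatest) auto
      then have "G x0 - G s \<le> Inf slopes * (x0 - s)" using 1 by (simp add: pos_divide_le_eq)
      then show ?thesis by (simp add: right_diff_distrib)
    next
      case 3
      have "Inf slopes \<le> (G x0 - G s) / (x0 - s)"
        using s 3 bdd unfolding slopes_def by (intro cInf_lower) auto
      also have "\<dots> = (G s - G x0) / (s - x0)"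
        by (metis minus_diff_eq minus_divide_divide)
      finally have "Inf slopes * (s - x0) \<le> G s - G x0" using 3 by (simp add: pos_le_divide_eq)
      then show ?thesis by simp
    qed simp
  qed
qed

text \<open>Jensen's inequality for the probability density \<open>2s\<close> on \<open>[0, 1]\<close>, whose mean is \<open>2/3\<close>.\<close>
lemma convex_on_centroid_le_weighted_integral:
  fixes G :: "real \<Rightarrow> real"
  assumes cv: "convex_on {0<..<1} G" and int: "(\<lambda>s. s * G s) integrable_on {0..1}"
  shows "G (2/3) / 2 \<le> integral {0..1} (\<lambda>s. s * G s)"
proof -
  let ?a = "G (2/3)"
  have "0 < (2/3::real)" "(2/3::real) < 1" by simp_all
  then obtain c where c: "\<And>s. s \<in> {0<..<1} \<Longrightarrow> ?a + c * (s - 2/3) \<le> G s"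
    by (rule convex_on_supporting_line[OF cv]) blast
  define F where "F s = s^2/2 * ?a + c * (s^3/3 - s^2/3)" for s :: real
  have "(F has_real_derivative s * (?a + c * (s - 2/3))) (at s)" for s
    unfolding F_def by (auto intro!: derivative_eq_intros simp: field_simps power2_eq_square)
  then have "((\<lambda>s. s * (?a + c * (s - 2/3))) has_integral (F 1 - F 0)) {0..1}"
    by (intro fundamental_theorem_of_calculus)
      (auto simp: has_real_derivative_iff_has_vector_derivative[symmetric] intro: has_field_derivative_at_within)
  then have "((\<lambda>s. s * (?a + c * (s - 2/3))) has_integral ?a / 2) {0<..<1}"
    by (simp add: F_def has_integral_Icc_iff_Ioo)
  moreover have "((\<lambda>s. s * G s) has_integral integral {0..1} (\<lambda>s. s * G s)) {0<..<1}"
    using integrable_integral[OF int] unfolding has_integral_Icc_iff_Ioo .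
  moreover have "s * (?a + c * (s - 2/3)) \<le> s * G s" if "s \<in> {0<..<1}" for s
    using c[OF that] that by (intro mult_left_mono) auto
  ultimately show ?thesis
    by (rule has_integral_le)
qed

lemma convex_on_triangle_bounded:
  fixes V X Y :: "'a::real_vector"
  assumes cv: "convex_on (convex hull {V, X, Y}) f"
  obtains K where "\<And>x. x \<in> convex hull {V, X, Y} \<Longrightarrow> \<bar>f x\<bar> \<le> K"
proof -
  define M where "M = max (f V) (max (f X) (f Y))"
  have up: "\<forall>x \<in> convex hull {V, X, Y}. f x \<le> M"
    by (rule convex_on_convex_hull_bound[OF cv]) (auto simp: M_def)
  define z where "z = (1/3) *\<^sub>R V + (1/3) *\<^sub>R X + (1/3) *\<^sub>R Y"
  have lo: "3 * f z - 2 * M \<le> f x" if x: "x \<in> convex hull {V, X, Y}" for x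
  proof -
    obtain a b c where abc: "x = a *\<^sub>R V + b *\<^sub>R X + c *\<^sub>R Y" "0 \<le> a" "0 \<le> b" "0 \<le> c" "a + b + c = 1"
      using x unfolding convex_hull_3 by blast
    txt \<open>Write the centroid as \<open>z = x/3 + 2y/3\<close> with \<open>y\<close> in the triangle.\<close>
    define y where "y = ((1-a)/2) *\<^sub>R V + ((1-b)/2) *\<^sub>R X + ((1-c)/2) *\<^sub>R Y"
    have "0 \<le> (1-a)/2 \<and> 0 \<le> (1-b)/2 \<and> 0 \<le> (1-c)/2 \<and> (1-a)/2 + (1-b)/2 + (1-c)/2 = 1"
      using abc by (auto simp: field_simps)
    then have y: "y \<in> convex hull {V, X, Y}"
      unfolding convex_hull_3 y_def by blast
    have "(1 - 2/3) *\<^sub>R x + (2/3) *\<^sub>R y = ((1/3) * a + (2/3) * ((1-a)/2)) *\<^sub>R V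
        + ((1/3) * b + (2/3) * ((1-b)/2)) *\<^sub>R X + ((1/3) * c + (2/3) * ((1-c)/2)) *\<^sub>R Y"
      unfolding abc(1) y_def scaleR_add_right scaleR_add_left scaleR_scaleR by (simp add: add_ac)
    also have "\<dots> = z"
      by (simp add: z_def field_simps)
    finally have "z = (1 - 2/3) *\<^sub>R x + (2/3) *\<^sub>R y" ..
    then have "f z \<le> (1 - 2/3) * f x + (2/3) * f y"
      using convex_onD[OF cv, of "2/3" x y] x y by simp
    with up y show ?thesis by fastforce
  qed
  show ?thesis
    by (rule that[of "\<bar>M\<bar> + \<bar>3 * f z - 2 * M\<bar>"]) (use up lo in \<open>fastforce simp: abs_le_iff\<close>)
qed

section \<open>Triangles sliced by homothetic segments\<close>

definition tri_param :: "real^2 \<Rightarrow> real^2 \<Rightarrow> real^2 \<Rightarrow> real^2 \<Rightarrow> real^2" where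
  "tri_param V X Y p = V + p$1 *\<^sub>R (X - V) + p$2 *\<^sub>R (Y - X)"

definition std_triangle :: "(real^2) set" where
  "std_triangle = {p. 0 \<le> p$2 \<and> p$2 \<le> p$1 \<and> p$1 \<le> 1}"

definition std_triangle_open :: "(real^2) set" where
  "std_triangle_open = {p. 0 < p$2 \<and> p$2 < p$1 \<and> p$1 < 1}"

lemma std_triangle_halfspaces:
  "std_triangle = {p. - axis 2 1 \<bullet> p \<le> 0} \<inter> {p. (axis 2 1 - axis 1 1) \<bullet> p \<le> 0} \<inter> {p. axis 1 1 \<bullet> p \<le> 1}"
  "std_triangle_open = {p. - axis 2 1 \<bullet> p < 0} \<inter> {p. (axis 2 1 - axis 1 1) \<bullet> p < 0} \<inter> {p. axis 1 1 \<bullet> p < 1}"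
  by (auto simp: std_triangle_def std_triangle_open_def inner_axis' inner_diff_left)

lemma convex_std_triangle: "convex std_triangle" "convex std_triangle_open"
  unfolding std_triangle_halfspaces
  by (intro convex_Int convex_halfspace_le convex_halfspace_lt)+

lemma closed_std_triangle: "closed std_triangle"
  unfolding std_triangle_halfspaces by (intro closed_Int closed_halfspace_le)

lemma open_std_triangle_open: "open std_triangle_open"
  unfolding std_triangle_halfspaces by (intro open_Int open_halfspace_lt)

lemma std_triangle_open_subset: "std_triangle_open \<subseteq> std_triangle"
  by (auto simp: std_triangle_def std_triangle_open_def)

lemma bounded_std_triangle_open: "bounded std_triangle_open"
proof -
  have "std_triangle_open \<subseteq> cbox 0 1"
    by (auto simp: std_triangle_open_def mem_box_cart forall_2)
  then show ?thesis by (meson bounded_cbox bounded_subset)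
qed

lemma negligible_std_triangle_boundary: "negligible (std_triangle - std_triangle_open)"
proof (rule negligible_subset)
  have "axis 2 1 - axis 1 1 \<noteq> (0::real^2)"
    by (simp add: vec_eq_iff forall_2 axis_def)
  then show "negligible ({x. axis 2 1 \<bullet> x = 0} \<union> {x. (axis 2 1 - axis 1 1) \<bullet> x = 0}
      \<union> {x::real^2. axis 1 1 \<bullet> x = 1})"
    by (intro negligible_Un negligible_hyperplane) (simp_all add: axis_eq_0_iff)
qed (auto simp: std_triangle_def std_triangle_open_def inner_axis' inner_diff_left)

lemma tri_param_affine:
  assumes "u + v = 1"
  shows "tri_param V X Y (u *\<^sub>R p + v *\<^sub>R q) = u *\<^sub>R tri_param V X Y p + v *\<^sub>R tri_param V X Y q"
proof -
  have "V = u *\<^sub>R V + v *\<^sub>R V" by (metis assms scaleR_add_left scaleR_one)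
  then show ?thesis by (simp add: tri_param_def algebra_simps)
qed

lemma tri_param_image: "tri_param V X Y ` std_triangle = convex hull {V, X, Y}"
proof
  show "tri_param V X Y ` std_triangle \<subseteq> convex hull {V, X, Y}"
  proof clarify
    fix p assume "p \<in> std_triangle"
    then have "0 \<le> 1 - p$1 \<and> 0 \<le> p$1 - p$2 \<and> 0 \<le> p$2 \<and> (1 - p$1) + (p$1 - p$2) + p$2 = 1"
      by (simp add: std_triangle_def)
    moreover have "tri_param V X Y p = (1 - p$1) *\<^sub>R V + (p$1 - p$2) *\<^sub>R X + p$2 *\<^sub>R Y"
      by (simp add: tri_param_def algebra_simps)
    ultimately show "tri_param V X Y p \<in> convex hull {V, X, Y}"
      unfolding convex_hull_3 by blast
  qed
  show "convex hull {V, X, Y} \<subseteq> tri_param V X Y ` std_triangle"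
  proof
    fix x assume "x \<in> convex hull {V, X, Y}"
    then obtain u v w where x: "x = u *\<^sub>R V + v *\<^sub>R X + w *\<^sub>R Y" "0 \<le> u" "0 \<le> v" "0 \<le> w" "u + v + w = 1"
      unfolding convex_hull_3 by blast
    have "V = u *\<^sub>R V + v *\<^sub>R V + w *\<^sub>R V"
      by (metis x(5) scaleR_add_left scaleR_one)
    then have "x = tri_param V X Y (vec2 (v + w, w))"
      by (simp add: x(1) tri_param_def algebra_simps)
    moreover have "vec2 (v + w, w) \<in> std_triangle"
      using x by (simp add: std_triangle_def)
    ultimately show "x \<in> tri_param V X Y ` std_triangle" by blast
  qed
qed

lemma tri_param_slice:
  "tri_param V X Y (vec2 (s, s * t)) = homothety V s X + t *\<^sub>R (homothety V s Y - homothety V s X)"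
  by (simp add: tri_param_def homothety_def algebra_simps)

lemma linear_tri_param_offset: "linear (\<lambda>p. tri_param V X Y p - V)"
  by (auto simp: linear_iff tri_param_def algebra_simps)

lemma det_tri_param_offset: "det (matrix (\<lambda>p. tri_param V X Y p - V)) = det2 (X - V) (Y - X)"
  by (simp add: det_2 matrix_def tri_param_def det2_def axis_def)

lemma convex_on_tri_param:
  assumes "convex_on (convex hull {V, X, Y}) f"
  shows "convex_on std_triangle (\<lambda>p. f (tri_param V X Y p))"
  unfolding convex_on_def
proof (intro conjI convex_std_triangle ballI allI impI)
  fix p q u v assume h: "p \<in> std_triangle" "q \<in> std_triangle" "(0::real) \<le> u" "0 \<le> v" "u + v = 1"
  then have "tri_param V X Y p \<in> convex hull {V, X, Y}" "tri_param V X Y q \<in> convex hull {V, X, Y}"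
    by (auto simp flip: tri_param_image)
  with assms[unfolded convex_on_def] h
  show "f (tri_param V X Y (u *\<^sub>R p + v *\<^sub>R q)) \<le> u * f (tri_param V X Y p) + v * f (tri_param V X Y q)"
    unfolding tri_param_affine[OF h(5)] by simp
qed

lemma integral_std_triangle_eq_open:
  fixes g :: "real^2 \<Rightarrow> real"
  assumes int: "set_integrable lborel std_triangle_open g"
  shows "g absolutely_integrable_on std_triangle"
    and "integral std_triangle g = (LINT p:std_triangle_open|lborel. g p)"
proof -
  have boundary: "negligible {p \<in> std_triangle - std_triangle_open. g p \<noteq> 0}"
    by (rule negligible_subset[OF negligible_std_triangle_boundary]) auto
  have "g absolutely_integrable_on std_triangle_open"
    unfolding absolutely_integrable_on_def
    using set_borel_integral_eq_integral(1)[OF int] set_borel_integral_eq_integral(1)[OF set_integrable_abs[OF int]]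
    by simp
  moreover have "{p \<in> std_triangle_open - std_triangle. g p \<noteq> 0} = {}"
    using std_triangle_open_subset by blast
  ultimately show "g absolutely_integrable_on std_triangle"
    using absolutely_integrable_spike_set_eq[OF _ boundary] by (metis negligible_empty)
  have "integral std_triangle g = integral std_triangle_open g"
    by (rule integral_spike_set)
      (use std_triangle_open_subset negligible_std_triangle_boundary in \<open>auto intro: negligible_subset\<close>)
  also have "\<dots> = (LINT p:std_triangle_open|lborel. g p)"
    by (rule set_borel_integral_eq_integral(2)[OF int, symmetric])
  finally show "integral std_triangle g = (LINT p:std_triangle_open|lborel. g p)" .
qed

lemma integral_triangle_change_of_variables:
  fixes f :: "real^2 \<Rightarrow> real"
  assumes det: "det2 (X - V) (Y - X) \<noteq> 0"
    and int: "set_integrable lborel std_triangle_open (\<lambda>p. f (tri_param V X Y p))"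
  shows "f absolutely_integrable_on convex hull {V, X, Y}"
    and "integral (convex hull {V, X, Y}) f
       = \<bar>det2 (X - V) (Y - X)\<bar> * (LINT p:std_triangle_open|lborel. f (tri_param V X Y p))"
proof -
  let ?g = "tri_param V X Y" and ?L = "\<lambda>p. tri_param V X Y p - V"
  let ?D = "\<bar>det2 (X - V) (Y - X)\<bar>"
  note closure = integral_std_triangle_eq_open[OF int]
  have der: "(?g has_derivative ?L) (at p within std_triangle)" for p
    using has_derivative_add_const[OF linear_imp_has_derivative[OF linear_tri_param_offset[of V X Y]], of V]
    by simp
  have "inj ?L"
    using det det_nz_iff_inj[OF linear_tri_param_offset] det_tri_param_offset by metis
  then have inj: "inj_on ?g std_triangle"
    by (simp add: inj_on_def inj_def)
  have "(\<lambda>p. ?D *\<^sub>R vec (f (?g p)) :: real^1) absolutely_integrable_on std_triangle"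
    using closure(1) by (intro absolutely_integrable_scaleR_left) (simp add: absolutely_integrable_on_1_iff)
  then have "(\<lambda>x. vec (f x) :: real^1) absolutely_integrable_on convex hull {V, X, Y}
     \<and> integral (convex hull {V, X, Y}) (\<lambda>x. vec (f x) :: real^1)
         = integral std_triangle (\<lambda>p. ?D *\<^sub>R vec (f (?g p)))"
    using has_absolute_integral_change_of_variables[OF lebesgue_closedin[of UNIV, simplified, OF closed_std_triangle] der inj]
    unfolding det_tri_param_offset tri_param_image by blast
  then show "f absolutely_integrable_on convex hull {V, X, Y}"
    and "integral (convex hull {V, X, Y}) f = ?D * (LINT p:std_triangle_open|lborel. f (?g p))"
    by (auto simp: absolutely_integrable_on_1_iff integral_on_1_eq vec_eq_iff closure(2))
qed

lemma set_integral_std_triangle_slices: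
  fixes h :: "real^2 \<Rightarrow> real"
  assumes int: "set_integrable lborel std_triangle_open h"
  defines "slice s \<equiv> LINT t:{0<..<1}|lborel. h (vec2 (s, s * t))"
  shows "set_integrable lborel {0<..<1} (\<lambda>s. s * slice s)"
    and "(LINT p:std_triangle_open|lborel. h p) = (LINT s:{0<..<1}|lborel. s * slice s)"
proof -
  define H where "H = (\<lambda>p. indicator std_triangle_open p * h p)"
  have intH: "integrable lborel H"
    using int by (simp add: set_integrable_def H_def)
  have H_borel: "H \<in> borel_measurable borel"
    using borel_measurable_integrable[OF intH] by simp
  have int_pair: "integrable (lborel \<Otimes>\<^sub>M lborel) (\<lambda>z. H (vec2 z))"
    using intH integrable_lborel_vec2[OF H_borel] by (simp add: lborel_prod)
  have inner: "(\<integral>v. H (vec2 (s, v)) \<partial>lborel) = indicator {0<..<1} s * (s * slice s)" for s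
  proof (cases "0 < s \<and> s < 1")
    case True
    have "(\<integral>v. H (vec2 (s, v)) \<partial>lborel) = (\<integral>v. indicator {0<..<s} v * h (vec2 (s, v)) \<partial>lborel)"
      using True by (intro Bochner_Integration.integral_cong) (auto simp: H_def std_triangle_open_def indicator_def)
    also have "\<dots> = \<bar>s\<bar> *\<^sub>R (\<integral>t. indicator {0<..<s} (0 + s * t) * h (vec2 (s, 0 + s * t)) \<partial>lborel)"
      using True by (intro lborel_integral_real_affine) auto
    also have "\<dots> = s * slice s"
      using True unfolding slice_def set_lebesgue_integral_def
      by (auto intro!: Bochner_Integration.integral_cong arg_cong2[where f="(*)"]
          simp: indicator_def zero_less_mult_iff mult_less_cancel_left1)
    finally show ?thesis using True by simp
  next
    case False
    then have "H (vec2 (s, v)) = 0" for v by (auto simp: H_def std_triangle_open_def)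
    with False show ?thesis by simp
  qed
  show "set_integrable lborel {0<..<1} (\<lambda>s. s * slice s)"
    using lborel_pair.integrable_fst'[OF int_pair] by (simp add: set_integrable_def inner)
  have "(LINT p:std_triangle_open|lborel. h p) = integral\<^sup>L lborel H"
    by (simp add: set_lebesgue_integral_def H_def)
  also have "\<dots> = (\<integral>z. H (vec2 z) \<partial>(lborel \<Otimes>\<^sub>M lborel))"
    using integral_lborel_vec2[OF H_borel] by (simp add: lborel_prod)
  also have "\<dots> = (\<integral>s. (\<integral>v. H (vec2 (s, v)) \<partial>lborel) \<partial>lborel)"
    by (rule lborel_pair.integral_fst'[OF int_pair, symmetric])
  finally show "(LINT p:std_triangle_open|lborel. h p) = (LINT s:{0<..<1}|lborel. s * slice s)"
    by (simp add: inner set_lebesgue_integral_def)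
qed

lemma continuous_on_tri_param:
  assumes "convex_on (convex hull {V, X, Y}) f"
  shows "continuous_on std_triangle_open (\<lambda>p. f (tri_param V X Y p))"
  using convex_on_subset[OF convex_on_tri_param[OF assms] std_triangle_open_subset convex_std_triangle(2)]
  by (rule convex_on_continuous[OF open_std_triangle_open])

lemma set_integrable_tri_param:
  assumes cv: "convex_on (convex hull {V, X, Y}) f"
  shows "set_integrable lborel std_triangle_open (\<lambda>p. f (tri_param V X Y p))"
proof -
  obtain K where "\<And>x. x \<in> convex hull {V, X, Y} \<Longrightarrow> \<bar>f x\<bar> \<le> K"
    using convex_on_triangle_bounded[OF cv] by blast
  then have "\<bar>f (tri_param V X Y p)\<bar> \<le> K" if "p \<in> std_triangle_open" for p
    using that std_triangle_open_subset by (auto simp flip: tri_param_image)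
  then show ?thesis
    by (intro set_integrable_bounded_continuous_on continuous_on_tri_param[OF cv]
        bounded_std_triangle_open borel_open open_std_triangle_open)
qed

lemma set_integrable_homothetic_segment:
  fixes V X Y :: "real^2" and f :: "real^2 \<Rightarrow> real"
  assumes cv: "convex_on (convex hull {V, X, Y}) f" and s: "0 < s" "s < 1"
  shows "set_integrable lborel {0<..<1}
    (\<lambda>t. f (homothety V s X + t *\<^sub>R (homothety V s Y - homothety V s X)))"
proof -
  obtain K where K: "\<And>x. x \<in> convex hull {V, X, Y} \<Longrightarrow> \<bar>f x\<bar> \<le> K"
    using convex_on_triangle_bounded[OF cv] by blast
  have into: "(\<lambda>t. vec2 (s, s * t)) ` {0<..<1} \<subseteq> std_triangle_open"
    using s by (auto simp: std_triangle_open_def)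
  have "continuous_on {0<..<1} (\<lambda>t. vec2 (s, s * t))"
    by (intro continuous_on_compose2[OF continuous_on_vec2] continuous_intros) auto
  from continuous_on_compose2[OF continuous_on_tri_param[OF cv] this into]
  have "continuous_on {0<..<1} (\<lambda>t. f (homothety V s X + t *\<^sub>R (homothety V s Y - homothety V s X)))"
    by (simp add: tri_param_slice)
  moreover have "vec2 (s, s * t) \<in> std_triangle" if "t \<in> {0<..<1}" for t
    using into that std_triangle_open_subset by blast
  then have "\<bar>f (homothety V s X + t *\<^sub>R (homothety V s Y - homothety V s X))\<bar> \<le> K"
    if "t \<in> {0<..<1}" for t
    using K that tri_param_slice[of V X Y s t] by (metis image_eqI tri_param_image)
  ultimately show ?thesis
    by (intro set_integrable_bounded_continuous_on) auto
qed

lemma avg_seg_homothetic_eq_set_integral: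
  fixes V X Y :: "real^2" and f :: "real^2 \<Rightarrow> real"
  assumes cv: "convex_on (convex hull {V, X, Y}) f" and s: "0 < s" "s < 1"
  shows "(\<lambda>t. f (homothety V s X + t *\<^sub>R (homothety V s Y - homothety V s X))) integrable_on {0..1}"
    and "avg_seg f (homothety V s X) (homothety V s Y)
       = (LINT t:{0<..<1}|lborel. f (homothety V s X + t *\<^sub>R (homothety V s Y - homothety V s X)))"
  using set_borel_integral_eq_integral[OF set_integrable_homothetic_segment[OF cv s]]
  by (simp_all add: avg_seg_def integrable_on_open_interval_real integral_open_interval_real)

lemma convex_on_avg_seg_homothetic:
  fixes V X Y :: "real^2" and f :: "real^2 \<Rightarrow> real"
  assumes cv: "convex_on (convex hull {V, X, Y}) f"
  shows "convex_on {0<..<1} (\<lambda>s. avg_seg f (homothety V s X) (homothety V s Y))"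
  unfolding convex_on_def
proof (intro conjI convex_real_interval ballI allI impI)
  fix s1 s2 u v :: real
  assume h: "s1 \<in> {0<..<1}" "s2 \<in> {0<..<1}" "0 \<le> u" "0 \<le> v" "u + v = 1"
  let ?seg = "\<lambda>s t. f (tri_param V X Y (vec2 (s, s * t)))"
  have int: "?seg s integrable_on {0..1}" if "s \<in> {0<..<1}" for s
    using that avg_seg_homothetic_eq_set_integral(1)[OF cv] by (auto simp: tri_param_slice)
  have m: "u *\<^sub>R s1 + v *\<^sub>R s2 \<in> {0<..<1}"
    by (rule convexD[OF _ h]) (simp add: convex_real_interval)
  have "?seg (u * s1 + v * s2) t \<le> u * ?seg s1 t + v * ?seg s2 t" if t: "t \<in> {0..1}" for t
  proof -
    have "vec2 (s, s * t) \<in> std_triangle" if "s \<in> {0<..<1}" for s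
      using that t by (auto simp: std_triangle_def intro: mult_le_one)
    then have "tri_param V X Y (vec2 (s1, s1 * t)) \<in> convex hull {V, X, Y}"
      "tri_param V X Y (vec2 (s2, s2 * t)) \<in> convex hull {V, X, Y}"
      using h by (auto simp flip: tri_param_image)
    moreover have "vec2 (u * s1 + v * s2, (u * s1 + v * s2) * t) = u *\<^sub>R vec2 (s1, s1 * t) + v *\<^sub>R vec2 (s2, s2 * t)"
      by (simp add: vec_eq_iff forall_2 algebra_simps)
    ultimately show ?thesis
      using cv[unfolded convex_on_def] h by (simp only: tri_param_affine[OF h(5)])
  qed
  then have "integral {0..1} (?seg (u * s1 + v * s2)) \<le> integral {0..1} (\<lambda>t. u * ?seg s1 t + v * ?seg s2 t)"
    using int h m by (intro integral_le integrable_add integrable_on_mult_right) auto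
  also have "\<dots> = u * integral {0..1} (?seg s1) + v * integral {0..1} (?seg s2)"
    using int h by (simp add: integral_add integrable_on_mult_right)
  finally show "avg_seg f (homothety V (u *\<^sub>R s1 + v *\<^sub>R s2) X) (homothety V (u *\<^sub>R s1 + v *\<^sub>R s2) Y)
      \<le> u * avg_seg f (homothety V s1 X) (homothety V s1 Y) + v * avg_seg f (homothety V s2 X) (homothety V s2 Y)"
    by (simp add: avg_seg_def tri_param_slice)
qed

lemma integral_triangle_slices:
  fixes V X Y :: "real^2" and f :: "real^2 \<Rightarrow> real"
  assumes det: "det2 (X - V) (Y - X) \<noteq> 0" and cv: "convex_on (convex hull {V, X, Y}) f"
  shows "f absolutely_integrable_on convex hull {V, X, Y}"
    and "(\<lambda>s. s * avg_seg f (homothety V s X) (homothety V s Y)) integrable_on {0..1}"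
    and "integral (convex hull {V, X, Y}) f
       = \<bar>det2 (X - V) (Y - X)\<bar> * integral {0..1} (\<lambda>s. s * avg_seg f (homothety V s X) (homothety V s Y))"
proof -
  let ?G = "\<lambda>s. avg_seg f (homothety V s X) (homothety V s Y)"
  note int = set_integrable_tri_param[OF cv]
  note slices = set_integral_std_triangle_slices[OF int, unfolded tri_param_slice]
  have slice_eq: "s * (LINT t:{0<..<1}|lborel. f (homothety V s X + t *\<^sub>R (homothety V s Y - homothety V s X)))
      = s * ?G s" if "s \<in> {0<..<1}" for s
    using that by (simp add: avg_seg_homothetic_eq_set_integral(2)[OF cv])
  have int_G: "set_integrable lborel {0<..<1} (\<lambda>s. s * ?G s)"
    using slices(1) by (subst set_integrable_cong[OF refl refl slice_eq, symmetric])
  have "(LINT s:{0<..<1}|lborel. s * ?G s) = integral {0..1} (\<lambda>s. s * ?G s)"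
    by (simp add: set_borel_integral_eq_integral(2)[OF int_G] integral_open_interval_real)
  moreover have "(LINT p:std_triangle_open|lborel. f (tri_param V X Y p)) = (LINT s:{0<..<1}|lborel. s * ?G s)"
    unfolding slices(2) by (rule set_lebesgue_integral_cong) (use slice_eq in auto)
  ultimately show "integral (convex hull {V, X, Y}) f = \<bar>det2 (X - V) (Y - X)\<bar> * integral {0..1} (\<lambda>s. s * ?G s)"
    using integral_triangle_change_of_variables(2)[OF det int] by simp
  show "f absolutely_integrable_on convex hull {V, X, Y}"
    by (rule integral_triangle_change_of_variables(1)[OF det int])
  show "(\<lambda>s. s * ?G s) integrable_on {0..1}"
    using set_borel_integral_eq_integral(1)[OF int_G] by (simp add: integrable_on_open_interval_real)
qed

lemma measure_triangle:
  fixes V X Y :: "real^2"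
  shows "measure lebesgue (convex hull {V, X, Y}) = \<bar>det2 (X - V) (Y - X)\<bar> / 2"
proof -
  have "closed (convex hull {V, X, Y})"
    by (simp add: compact_imp_closed finite_imp_compact_convex_hull)
  then have "measure lebesgue (convex hull {V, X, Y}) = measure lborel (convex hull {V, X, Y})"
    by (intro measure_completion) simp
  moreover have "(Y$1 - V$1) * (X$2 - V$2) - (X$1 - V$1) * (Y$2 - V$2) = - det2 (X - V) (Y - X)"
    by (simp add: det2_def algebra_simps)
  ultimately show ?thesis
    by (simp add: content_triangle)
qed

lemma absolutely_integrable_convex_on_triangle:
  fixes V X Y :: "real^2" and f :: "real^2 \<Rightarrow> real"
  assumes cv: "convex_on (convex hull {V, X, Y}) f"
  shows "f absolutely_integrable_on convex hull {V, X, Y}"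
proof (cases "det2 (X - V) (Y - X) = 0")
  case True
  then have "negligible (convex hull {V, X, Y})"
    by (simp add: negligible_iff_measure measure_triangle lmeasurable_compact finite_imp_compact_convex_hull)
  then show ?thesis by (rule absolutely_integrable_negligible)
qed (rule integral_triangle_slices(1)[OF _ cv])

lemma avg_seg_two_thirds_le_triangle:
  fixes V X Y :: "real^2" and f :: "real^2 \<Rightarrow> real"
  assumes area: "measure lebesgue (convex hull {V, X, Y}) \<noteq> 0" and cv: "convex_on (convex hull {V, X, Y}) f"
  shows "avg_seg f (homothety V (2/3) X) (homothety V (2/3) Y) * measure lebesgue (convex hull {V, X, Y})
      \<le> integral (convex hull {V, X, Y}) f"
proof -
  let ?G = "\<lambda>s. avg_seg f (homothety V s X) (homothety V s Y)"
  have det: "det2 (X - V) (Y - X) \<noteq> 0"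
    using area by (simp add: measure_triangle)
  have "?G (2/3) * measure lebesgue (convex hull {V, X, Y}) = \<bar>det2 (X - V) (Y - X)\<bar> * (?G (2/3) / 2)"
    by (simp add: measure_triangle)
  also have "\<dots> \<le> \<bar>det2 (X - V) (Y - X)\<bar> * integral {0..1} (\<lambda>s. s * ?G s)"
    using convex_on_centroid_le_weighted_integral[OF convex_on_avg_seg_homothetic[OF cv] integral_triangle_slices(2)[OF det cv]]
    by (intro mult_left_mono) simp_all
  also have "\<dots> = integral (convex hull {V, X, Y}) f"
    by (rule integral_triangle_slices(3)[OF det cv, symmetric])
  finally show ?thesis .
qed

section \<open>Parallelograms\<close>

definition frame_point :: "real^2 \<Rightarrow> real^2 \<Rightarrow> real^2 \<Rightarrow> real \<Rightarrow> real \<Rightarrow> real^2" where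
  "frame_point A u w a b = A + a *\<^sub>R u + b *\<^sub>R w"

lemma frame_point_convex_combination:
  assumes "p + q + r = 1"
  shows "p *\<^sub>R frame_point A u w a1 b1 + q *\<^sub>R frame_point A u w a2 b2 + r *\<^sub>R frame_point A u w a3 b3
     = frame_point A u w (p * a1 + q * a2 + r * a3) (p * b1 + q * b2 + r * b3)"
proof -
  have "p *\<^sub>R A + q *\<^sub>R A + r *\<^sub>R A = A" by (metis assms scaleR_add_left scaleR_one)
  then show ?thesis unfolding frame_point_def by (simp add: algebra_simps)
qed

lemma frame_point_eq_iff:
  assumes det: "det2 u w \<noteq> 0"
  shows "frame_point A u w a b = frame_point A u w a' b' \<longleftrightarrow> a = a' \<and> b = b'"
proof
  assume "frame_point A u w a b = frame_point A u w a' b'"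
  then have "(a - a') *\<^sub>R u + (b - b') *\<^sub>R w = 0"
    unfolding frame_point_def by (simp add: algebra_simps)
  then have e1: "(a - a') * u$1 + (b - b') * w$1 = 0" and e2: "(a - a') * u$2 + (b - b') * w$2 = 0"
    by (simp_all add: vec_eq_iff forall_2)
  have "(a - a') * det2 u w = w$2 * ((a - a') * u$1 + (b - b') * w$1) - w$1 * ((a - a') * u$2 + (b - b') * w$2)"
    and "(b - b') * det2 u w = u$1 * ((a - a') * u$2 + (b - b') * w$2) - u$2 * ((a - a') * u$1 + (b - b') * w$1)"
    by (simp_all add: det2_def algebra_simps)
  then have "(a - a') * det2 u w = 0" "(b - b') * det2 u w = 0"
    by (simp_all only: e1 e2)
  with det show "a = a' \<and> b = b'" by simp
qed simp

lemma frame_point_surj: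
  assumes det: "det2 u w \<noteq> 0"
  obtains a b where "x = frame_point A u w a b"
proof
  let ?y = "x - A"
  have "det2 ?y w * u$1 + det2 u ?y * w$1 = ?y$1 * det2 u w"
    and "det2 ?y w * u$2 + det2 u ?y * w$2 = ?y$2 * det2 u w"
    by (simp_all add: det2_def algebra_simps)
  with det have "?y$1 = (det2 ?y w / det2 u w) * u$1 + (det2 u ?y / det2 u w) * w$1"
    and "?y$2 = (det2 ?y w / det2 u w) * u$2 + (det2 u ?y / det2 u w) * w$2"
    by (simp_all add: field_simps)
  then show "x = frame_point A u w (det2 ?y w / det2 u w) (det2 u ?y / det2 u w)"
    by (simp add: frame_point_def vec_eq_iff forall_2 algebra_simps)
qed

lemma frame_point_in_convex_hull3_iff:
  assumes det: "det2 u w \<noteq> 0"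
  shows "frame_point A u w a b \<in> convex hull {frame_point A u w a1 b1, frame_point A u w a2 b2, frame_point A u w a3 b3}
    \<longleftrightarrow> (\<exists>p q r. 0 \<le> p \<and> 0 \<le> q \<and> 0 \<le> r \<and> p + q + r = 1
          \<and> a = p * a1 + q * a2 + r * a3 \<and> b = p * b1 + q * b2 + r * b3)"
  unfolding convex_hull_3
  using frame_point_convex_combination[of _ _ _ A u w] frame_point_eq_iff[OF det]
  by (smt (verit) mem_Collect_eq)

lemma frame_point_in_quarter_iff:
  assumes det: "det2 u w \<noteq> 0"
  shows "frame_point A u w a b \<in> convex hull {frame_point A u w 0 0, frame_point A u w (1/2) (1/2), frame_point A u w 1 0}
      \<longleftrightarrow> 0 \<le> b \<and> b \<le> a \<and> a + b \<le> 1"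
    and "frame_point A u w a b \<in> convex hull {frame_point A u w 1 0, frame_point A u w (1/2) (1/2), frame_point A u w 1 1}
      \<longleftrightarrow> b \<le> a \<and> a \<le> 1 \<and> 1 \<le> a + b"
    and "frame_point A u w a b \<in> convex hull {frame_point A u w 1 1, frame_point A u w (1/2) (1/2), frame_point A u w 0 1}
      \<longleftrightarrow> a \<le> b \<and> b \<le> 1 \<and> 1 \<le> a + b"
    and "frame_point A u w a b \<in> convex hull {frame_point A u w 0 1, frame_point A u w (1/2) (1/2), frame_point A u w 0 0}
      \<longleftrightarrow> 0 \<le> a \<and> a \<le> b \<and> a + b \<le> 1"
  unfolding frame_point_in_convex_hull3_iff[OF det]
proof -
  show "(\<exists>p q r. 0 \<le> p \<and> 0 \<le> q \<and> 0 \<le> r \<and> p + q + r = 1 \<and> a = p * 0 + q * (1/2) + r * 1 \<and> b = p * 0 + q * (1/2) + r * 0)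
      \<longleftrightarrow> 0 \<le> b \<and> b \<le> a \<and> a + b \<le> 1"
    by (rule iffI, force) (rule exI[of _ "1 - a - b"], rule exI[of _ "2 * b"], rule exI[of _ "a - b"], simp)
  show "(\<exists>p q r. 0 \<le> p \<and> 0 \<le> q \<and> 0 \<le> r \<and> p + q + r = 1 \<and> a = p * 1 + q * (1/2) + r * 1 \<and> b = p * 0 + q * (1/2) + r * 1)
      \<longleftrightarrow> b \<le> a \<and> a \<le> 1 \<and> 1 \<le> a + b"
    by (rule iffI, force) (rule exI[of _ "a - b"], rule exI[of _ "2 * (1 - a)"], rule exI[of _ "a + b - 1"], simp add: field_simps)
  show "(\<exists>p q r. 0 \<le> p \<and> 0 \<le> q \<and> 0 \<le> r \<and> p + q + r = 1 \<and> a = p * 1 + q * (1/2) + r * 0 \<and> b = p * 1 + q * (1/2) + r * 1)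
      \<longleftrightarrow> a \<le> b \<and> b \<le> 1 \<and> 1 \<le> a + b"
    by (rule iffI, force) (rule exI[of _ "a + b - 1"], rule exI[of _ "2 * (1 - b)"], rule exI[of _ "b - a"], simp add: field_simps)
  show "(\<exists>p q r. 0 \<le> p \<and> 0 \<le> q \<and> 0 \<le> r \<and> p + q + r = 1 \<and> a = p * 0 + q * (1/2) + r * 0 \<and> b = p * 1 + q * (1/2) + r * 0)
      \<longleftrightarrow> 0 \<le> a \<and> a \<le> b \<and> a + b \<le> 1"
    by (rule iffI, force) (rule exI[of _ "b - a"], rule exI[of _ "2 * a"], rule exI[of _ "1 - a - b"], simp)
qed

lemma convex_hull_frame_square_subset:
  "convex hull {frame_point A u w 0 0, frame_point A u w 1 0, frame_point A u w 1 1, frame_point A u w 0 1}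
    \<subseteq> {frame_point A u w a b | a b. 0 \<le> a \<and> a \<le> 1 \<and> 0 \<le> b \<and> b \<le> 1}"
proof (rule hull_minimal)
  let ?S = "{frame_point A u w a b | a b. 0 \<le> a \<and> a \<le> 1 \<and> 0 \<le> b \<and> b \<le> 1}"
  show "{frame_point A u w 0 0, frame_point A u w 1 0, frame_point A u w 1 1, frame_point A u w 0 1} \<subseteq> ?S"
    by force
  show "convex ?S"
  proof (rule convexI)
    fix x y and p q :: real
    assume "x \<in> ?S" "y \<in> ?S" and pq: "0 \<le> p" "0 \<le> q" "p + q = 1"
    then obtain a1 b1 a2 b2 where x: "x = frame_point A u w a1 b1" "0 \<le> a1" "a1 \<le> 1" "0 \<le> b1" "b1 \<le> 1"
      and y: "y = frame_point A u w a2 b2" "0 \<le> a2" "a2 \<le> 1" "0 \<le> b2" "b2 \<le> 1"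
      by blast
    have "p *\<^sub>R x + q *\<^sub>R y = frame_point A u w (p * a1 + q * a2) (p * b1 + q * b2)"
      using frame_point_convex_combination[of p q 0 A u w a1 b1 a2 b2 0 0] pq x y by simp
    moreover have "p * a1 + q * a2 \<le> p * 1 + q * 1" "p * b1 + q * b2 \<le> p * 1 + q * 1"
      using pq x y by (intro add_mono mult_left_mono; simp)+
    moreover have "0 \<le> p * a1 + q * a2" "0 \<le> p * b1 + q * b2"
      using pq x y by simp_all
    ultimately show "p *\<^sub>R x + q *\<^sub>R y \<in> ?S"
      using pq by auto
  qed
qed

lemma frame_square_eq_union_quarters:
  fixes A u w :: "real^2"
  assumes det: "det2 u w \<noteq> 0"
  defines "F \<equiv> frame_point A u w"
  shows "convex hull {F 0 0, F 1 0, F 1 1, F 0 1}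
    = convex hull {F 0 0, F (1/2) (1/2), F 1 0} \<union> convex hull {F 1 0, F (1/2) (1/2), F 1 1}
      \<union> convex hull {F 1 1, F (1/2) (1/2), F 0 1} \<union> convex hull {F 0 1, F (1/2) (1/2), F 0 0}"
    (is "?Q = ?T1 \<union> ?T2 \<union> ?T3 \<union> ?T4")
proof
  show "?Q \<subseteq> ?T1 \<union> ?T2 \<union> ?T3 \<union> ?T4"
  proof
    fix x assume "x \<in> ?Q"
    then obtain a b where x: "x = F a b" "0 \<le> a" "a \<le> 1" "0 \<le> b" "b \<le> 1"
      using convex_hull_frame_square_subset[of A u w] unfolding F_def by blast
    then have "(0 \<le> b \<and> b \<le> a \<and> a + b \<le> 1) \<or> (b \<le> a \<and> a \<le> 1 \<and> 1 \<le> a + b)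
        \<or> (a \<le> b \<and> b \<le> 1 \<and> 1 \<le> a + b) \<or> (0 \<le> a \<and> a \<le> b \<and> a + b \<le> 1)"
      by auto
    then show "x \<in> ?T1 \<union> ?T2 \<union> ?T3 \<union> ?T4"
      unfolding x F_def by (auto simp: frame_point_in_quarter_iff[OF det])
  qed
  have "F (1/2) (1/2) = (1/2) *\<^sub>R F 0 0 + (1/2) *\<^sub>R F 1 1"
    using frame_point_convex_combination[of "1/2" "1/2" 0 A u w 0 0 1 1 0 0] by (simp add: F_def)
  then have "F (1/2) (1/2) \<in> ?Q"
    by (simp add: convexD convex_convex_hull hull_inc)
  then show "?T1 \<union> ?T2 \<union> ?T3 \<union> ?T4 \<subseteq> ?Q"
    by (intro Un_least hull_minimal convex_convex_hull) (auto simp: hull_inc)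
qed

lemma negligible_frame_quarter_overlaps:
  fixes A u w :: "real^2"
  assumes det: "det2 u w \<noteq> 0"
  defines "F \<equiv> frame_point A u w"
  defines "T1 \<equiv> convex hull {F 0 0, F (1/2) (1/2), F 1 0}" and "T2 \<equiv> convex hull {F 1 0, F (1/2) (1/2), F 1 1}"
    and "T3 \<equiv> convex hull {F 1 1, F (1/2) (1/2), F 0 1}" and "T4 \<equiv> convex hull {F 0 1, F (1/2) (1/2), F 0 0}"
  shows "negligible (T1 \<inter> T2)" "negligible ((T1 \<union> T2) \<inter> T3)" "negligible ((T1 \<union> T2 \<union> T3) \<inter> T4)"
proof -
  define N where "N = {A + t *\<^sub>R (u + w) | t. True} \<union> {(A + w) + t *\<^sub>R (u - w) | t. True}"
  have "u + w \<noteq> 0" "u - w \<noteq> 0"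
    using det by (auto simp: det2_def eq_neg_iff_add_eq_0[symmetric])
  then have "negligible N"
    unfolding N_def by (intro negligible_Un negligible_line)
  have diagonal: "F a b \<in> N" if "a = b \<or> a + b = 1" for a b
  proof -
    have "F a b = A + a *\<^sub>R (u + w) \<or> F a b = (A + w) + a *\<^sub>R (u - w)"
      using that by (auto simp: F_def frame_point_def algebra_simps simp flip: scaleR_add_left)
    then show ?thesis unfolding N_def by blast
  qed
  have "T1 \<inter> T2 \<union> (T1 \<union> T2) \<inter> T3 \<union> (T1 \<union> T2 \<union> T3) \<inter> T4 \<subseteq> N"
  proof
    fix x assume x: "x \<in> T1 \<inter> T2 \<union> (T1 \<union> T2) \<inter> T3 \<union> (T1 \<union> T2 \<union> T3) \<inter> T4"
    obtain a b where ab: "x = F a b"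
      using frame_point_surj[OF det] unfolding F_def by metis
    have "a = b \<or> a + b = 1"
      using x unfolding ab T1_def T2_def T3_def T4_def F_def by (auto simp: frame_point_in_quarter_iff[OF det])
    then show "x \<in> N" unfolding ab by (rule diagonal)
  qed
  then show "negligible (T1 \<inter> T2)" "negligible ((T1 \<union> T2) \<inter> T3)" "negligible ((T1 \<union> T2 \<union> T3) \<inter> T4)"
    using negligible_subset[OF \<open>negligible N\<close>] by blast+
qed

lemma parallelogram_frame:
  fixes A B C D :: "real^2"
  assumes para: "A + C = B + D" and nondeg: "\<not> collinear {A, B, C}"
  shows "det2 (B - A) (D - A) \<noteq> 0"
    and "frame_point A (B - A) (D - A) 0 0 = A" "frame_point A (B - A) (D - A) 1 0 = B"
      "frame_point A (B - A) (D - A) 1 1 = C" "frame_point A (B - A) (D - A) 0 1 = D"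
      "frame_point A (B - A) (D - A) (1/2) (1/2) = midpoint A C"
proof -
  have C: "C = B + D - A" using para by (simp add: algebra_simps)
  show "det2 (B - A) (D - A) \<noteq> 0"
  proof
    assume "det2 (B - A) (D - A) = 0"
    then have "det2 (A - B) (C - B) = 0" by (simp add: C det2_def algebra_simps)
    then have "collinear {0, A - B, C - B}" by (rule collinear_if_det2_eq_0)
    with nondeg show False by (simp add: collinear_3)
  qed
  show "frame_point A (B - A) (D - A) 0 0 = A" "frame_point A (B - A) (D - A) 1 0 = B"
    "frame_point A (B - A) (D - A) 1 1 = C" "frame_point A (B - A) (D - A) 0 1 = D"
    "frame_point A (B - A) (D - A) (1/2) (1/2) = midpoint A C"
    by (simp_all add: frame_point_def midpoint_def C vec_eq_iff algebra_simps)
qed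

lemma integral_parallelogram_center_triangles:
  fixes A B C D :: "real^2" and g :: "real^2 \<Rightarrow> real"
  assumes para: "A + C = B + D" and nondeg: "\<not> collinear {A, B, C}"
  defines "Z \<equiv> midpoint A C"
  assumes g: "g integrable_on convex hull {A, Z, B}" "g integrable_on convex hull {B, Z, C}"
    "g integrable_on convex hull {C, Z, D}" "g integrable_on convex hull {D, Z, A}"
  shows "integral (convex hull {A, B, C, D}) g = integral (convex hull {A, Z, B}) g
    + integral (convex hull {B, Z, C}) g + integral (convex hull {C, Z, D}) g + integral (convex hull {D, Z, A}) g"
proof -
  note frame = parallelogram_frame[OF para nondeg]
  note union = frame_square_eq_union_quarters[OF frame(1), where A=A, unfolded frame(2-6), folded Z_def]
  note negligible = negligible_frame_quarter_overlaps[OF frame(1), where A=A, unfolded frame(2-6), folded Z_def]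
  show ?thesis
    unfolding union using g negligible by (simp add: integral_Un integrable_Un)
qed

lemma measure_parallelogram_center_triangles:
  fixes A B C D :: "real^2"
  assumes para: "A + C = B + D" and nondeg: "\<not> collinear {A, B, C}"
  defines "Z \<equiv> midpoint A C" and "m \<equiv> measure lebesgue (convex hull {A, B, C, D})"
  shows "0 < m"
    and "measure lebesgue (convex hull {A, Z, B}) = m / 4" "measure lebesgue (convex hull {B, Z, C}) = m / 4"
      "measure lebesgue (convex hull {C, Z, D}) = m / 4" "measure lebesgue (convex hull {D, Z, A}) = m / 4"
proof -
  define \<delta> where "\<delta> = det2 (B - A) (D - A)"
  have C: "C = B + D - A" using para by (simp add: algebra_simps)
  have Z: "Z = (1/2) *\<^sub>R (B + D)" unfolding Z_def midpoint_def using para by simp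
  have "det2 (Z - A) (B - Z) = - \<delta> / 2" "det2 (Z - B) (C - Z) = - \<delta> / 2"
    "det2 (Z - C) (D - Z) = - \<delta> / 2" "det2 (Z - D) (A - Z) = - \<delta> / 2"
    by (simp_all add: \<delta>_def det2_def C Z field_simps)
  then have quarter: "measure lebesgue (convex hull {A, Z, B}) = \<bar>\<delta>\<bar> / 4" "measure lebesgue (convex hull {B, Z, C}) = \<bar>\<delta>\<bar> / 4"
    "measure lebesgue (convex hull {C, Z, D}) = \<bar>\<delta>\<bar> / 4" "measure lebesgue (convex hull {D, Z, A}) = \<bar>\<delta>\<bar> / 4"
    by (simp_all add: measure_triangle)
  have lmeasurable: "convex hull S \<in> lmeasurable" if "finite S" for S :: "(real^2) set"
    by (simp add: lmeasurable_compact finite_imp_compact_convex_hull that)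
  have "m = integral (convex hull {A, B, C, D}) (\<lambda>_. 1::real)"
    by (simp add: m_def lmeasure_integral lmeasurable)
  also have "\<dots> = \<bar>\<delta>\<bar>"
    using integral_parallelogram_center_triangles[OF para nondeg, of "\<lambda>_. 1", folded Z_def] quarter
    by (simp add: lmeasure_integral lmeasurable integrable_on_const)
  finally have "m = \<bar>\<delta>\<bar>" .
  with parallelogram_frame(1)[OF para nondeg] quarter
  show "0 < m"
    and "measure lebesgue (convex hull {A, Z, B}) = m / 4" "measure lebesgue (convex hull {B, Z, C}) = m / 4"
      "measure lebesgue (convex hull {C, Z, D}) = m / 4" "measure lebesgue (convex hull {D, Z, A}) = m / 4"
    by (simp_all add: \<delta>_def)
qed

theorem theorem3p4:
  fixes A B C D :: "real^2" and f :: "real^2 \<Rightarrow> real"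
  assumes para: "A + C = B + D"
    and nondeg: "\<not> collinear {A, B, C}"
    and convAOB: "convex_on (convex hull {A, midpoint A C, B}) f"
    and convBOC: "convex_on (convex hull {B, midpoint A C, C}) f"
    and convCOD: "convex_on (convex hull {C, midpoint A C, D}) f"
    and convDOA: "convex_on (convex hull {D, midpoint A C, A}) f"
  shows
   "(let Z = midpoint A C;
        K = homothety D (2/3) A; L = homothety D (2/3) Z; M = homothety D (2/3) C;
        P = homothety B (2/3) A; Q = homothety B (2/3) Z; R = homothety B (2/3) C
    in (avg_seg f K L + avg_seg f L M + avg_seg f P Q + avg_seg f Q R) / 4
         \<le> avg_region f (convex hull {A, B, C, D}))
    \<and> (let Z = midpoint A C;
        A' = homothety Z (2/3) A; B' = homothety Z (2/3) B;
        C' = homothety Z (2/3) C; D' = homothety Z (2/3) D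
    in (avg_seg f A' B' + avg_seg f B' C' + avg_seg f C' D' + avg_seg f D' A') / 4
         \<le> avg_region f (convex hull {A, B, C, D}))"
proof -
  define Z where "Z = midpoint A C"
  define m where "m = measure lebesgue (convex hull {A, B, C, D})"
  note quarters = measure_parallelogram_center_triangles[OF para nondeg, folded Z_def m_def]
  note convex = convAOB[folded Z_def] convBOC[folded Z_def] convCOD[folded Z_def] convDOA[folded Z_def]
  have seg: "avg_seg f (homothety V (2/3) X) (homothety V (2/3) Y) * (m / 4) \<le> integral T f"
    if "convex hull {V, X, Y} = T"
      "T \<in> {convex hull {A, Z, B}, convex hull {B, Z, C}, convex hull {C, Z, D}, convex hull {D, Z, A}}"
    for V X Y T
    using avg_seg_two_thirds_le_triangle[of V X Y f] that quarters convex by auto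
  have "integral (convex hull {A, B, C, D}) f = integral (convex hull {A, Z, B}) f
      + integral (convex hull {B, Z, C}) f + integral (convex hull {C, Z, D}) f + integral (convex hull {D, Z, A}) f"
    unfolding Z_def
    by (intro integral_parallelogram_center_triangles[OF para nondeg] set_lebesgue_integral_eq_integral(1)
        absolutely_integrable_convex_on_triangle convex[unfolded Z_def])
  with quarters(1) show ?thesis
    unfolding Let_def Z_def[symmetric] avg_region_def m_def[symmetric]
    using seg[of D A Z] seg[of D Z C] seg[of B A Z] seg[of B Z C]
      seg[of Z A B] seg[of Z B C] seg[of Z C D] seg[of Z D A]
    by (simp add: insert_commute pos_le_divide_eq field_simps)
qed

end
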